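(* Let $\theta^{(1)},\ldots,\theta^{(M)}\in\mathbb{R}^D$ be an ensemble with empirical mean $\hat m=\frac1M\sum_i\theta^{(i)}$ and invertible empirical covariance $\hat\Sigma=\frac{1}{M-1}\sum_i(\theta^{(i)}-\hat m)(\theta^{(i)}-\hat m)^{\rm T}$, and let $\epsilon>0$. Define $$g_\epsilon(\theta,\theta')=\exp\Big(-\tfrac{1}{4\epsilon}(\theta-\theta')^{\rm T}\hat\Sigma^{-1}(\theta-\theta')\Big),\qquad k_\epsilon(\theta,\theta')=\frac{g_\epsilon(\theta,\theta')}{\sqrt{\sum_{i}g_\epsilon(\theta,\theta^{(i)})}\sqrt{\sum_i g_\epsilon(\theta',\theta^{(i)})}},$$ $n_\epsilon(\theta)=\sum_{i=1}^M k_\epsilon(\theta,\theta^{(i)})$, and the $M\times M$ Markov matrix ${\rm T}_{ij}=k_\epsilon(\theta^{(i)},\theta^{(j)})/n_\epsilon(\theta^{(i)})$. Let $\Psi_{\rm data}:\mathbb{R}^D\to\mathbb{R}$, let $\Delta\Psi^{(j)}_{\rm data}=\Psi_{\rm data}(\theta^{(j)})-\frac1M\sum_{k=1}^M\Psi_{\rm data}(\theta^{(k)})$, let $\tilde{\rm V}\in\mathbb{R}^M$ solve $\tilde{\rm V}={\rm T}\tilde{\rm V}+\epsilon\,\Delta\Psi_{\rm data}$, set $r_j=\tilde{\rm V}^{(j)}+\epsilon\,\Delta\Psi^{(j)}_{\rm data}$, and define $$\tilde V(\theta)=\frac{1}{n_\epsilon(\theta)}\sum_{j=1}^M k_\epsilon(\theta,\theta^{(j)})\,r_j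 .$$ Then for each $i=1,\ldots,M$, $$\hat\Sigma\,\nabla_\theta\tilde V(\theta^{(i)})=\sum_{j=1}^M s_{ij}\,\theta^{(j)},\qquad s_{ij}=\frac{1}{2\epsilon}{\rm T}_{ij}\Big(r_j-\sum_{k=1}^M{\rm T}_{ik}r_k\Big).$$ *)

theory Defs
  imports "HOL-Analysis.Analysis"
begin

definition outer_prod :: "real^'d \<Rightarrow> real^'d \<Rightarrow> real^'d^'d" where
  "outer_prod u v = (\<chi> a b. u $ a * v $ b)"

definition emp_mean :: "nat \<Rightarrow> (nat \<Rightarrow> real^'d) \<Rightarrow> real^'d" where
  "emp_mean M \<theta> = (1 / real M) *\<^sub>R (\<Sum>i=1..M. \<theta> i)"

definition emp_cov :: "nat \<Rightarrow> (nat \<Rightarrow> real^'d) \<Rightarrow> real^'d^'d" where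
  "emp_cov M \<theta> = (1 / (real M - 1)) *\<^sub>R
     (\<Sum>i=1..M. outer_prod (\<theta> i - emp_mean M \<theta>) (\<theta> i - emp_mean M \<theta>))"

definition g_eps :: "nat \<Rightarrow> (nat \<Rightarrow> real^'d) \<Rightarrow> real \<Rightarrow> real^'d \<Rightarrow> real^'d \<Rightarrow> real" where
  "g_eps M \<theta> \<epsilon> x y =
     exp (- (1 / (4 * \<epsilon>)) * ((x - y) \<bullet> (matrix_inv (emp_cov M \<theta>) *v (x - y))))"

definition k_eps :: "nat \<Rightarrow> (nat \<Rightarrow> real^'d) \<Rightarrow> real \<Rightarrow> real^'d \<Rightarrow> real^'d \<Rightarrow> real" where
  "k_eps M \<theta> \<epsilon> x y = g_eps M \<theta> \<epsilon> x y /
     (sqrt (\<Sum>i=1..M. g_eps M \<theta> \<epsilon> x (\<theta> i)) * sqrt (\<Sum>i=1..M. g_eps M \<theta> \<epsilon> y (\<theta> i)))"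

definition n_eps :: "nat \<Rightarrow> (nat \<Rightarrow> real^'d) \<Rightarrow> real \<Rightarrow> real^'d \<Rightarrow> real" where
  "n_eps M \<theta> \<epsilon> x = (\<Sum>i=1..M. k_eps M \<theta> \<epsilon> x (\<theta> i))"

definition markov_T :: "nat \<Rightarrow> (nat \<Rightarrow> real^'d) \<Rightarrow> real \<Rightarrow> nat \<Rightarrow> nat \<Rightarrow> real" where
  "markov_T M \<theta> \<epsilon> i j = k_eps M \<theta> \<epsilon> (\<theta> i) (\<theta> j) / n_eps M \<theta> \<epsilon> (\<theta> i)"

definition delta_Psi :: "nat \<Rightarrow> (nat \<Rightarrow> real^'d) \<Rightarrow> (real^'d \<Rightarrow> real) \<Rightarrow> nat \<Rightarrow> real" where
  "delta_Psi M \<theta> \<Psi> j = \<Psi> (\<theta> j) - (1 / real M) * (\<Sum>k=1..M. \<Psi> (\<theta> k))"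

definition r_vec :: "nat \<Rightarrow> (nat \<Rightarrow> real^'d) \<Rightarrow> real \<Rightarrow> (real^'d \<Rightarrow> real) \<Rightarrow> (nat \<Rightarrow> real) \<Rightarrow> nat \<Rightarrow> real" where
  "r_vec M \<theta> \<epsilon> \<Psi> Vt j = Vt j + \<epsilon> * delta_Psi M \<theta> \<Psi> j"

definition V_interp :: "nat \<Rightarrow> (nat \<Rightarrow> real^'d) \<Rightarrow> real \<Rightarrow> (nat \<Rightarrow> real) \<Rightarrow> real^'d \<Rightarrow> real" where
  "V_interp M \<theta> \<epsilon> r x = (1 / n_eps M \<theta> \<epsilon> x) * (\<Sum>j=1..M. k_eps M \<theta> \<epsilon> x (\<theta> j) * r j)"

definition s_coef :: "nat \<Rightarrow> (nat \<Rightarrow> real^'d) \<Rightarrow> real \<Rightarrow> (nat \<Rightarrow> real) \<Rightarrow> nat \<Rightarrow> nat \<Rightarrow> real" where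
  "s_coef M \<theta> \<epsilon> r i j = (1 / (2 * \<epsilon>)) * markov_T M \<theta> \<epsilon> i j *
     (r j - (\<Sum>k=1..M. markov_T M \<theta> \<epsilon> i k * r k))"

end

theory Submission
  imports Defs
begin

text \<open>Up to the factor 1 / sqrt (\<Sum>k. g_eps x (\<theta> k)), which cancels, the interpolant is the
  weighted average \<Sum>j w_j(x) r_j / \<Sum>j w_j(x) of the r_j with Gaussian weights w_j(x)
  proportional to g_eps x (\<theta> j). The gradient of a weighted average is
  \<Sum>j (r_j - V) / W \<nabla>w_j, and \<nabla>w_j(x) = -w_j(x) / (2\<epsilon>) \<Sigma>^-1 (x - \<theta> j). Hence
  \<Sigma> \<nabla>V(\<theta> i) = \<Sum>j s_ij (\<theta> j - \<theta> i), and the \<theta> i term vanishes because the s_ij sum to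
  zero over j, T being row-stochastic.\<close>

lemma matrix_mul_matrix_inv:
  fixes A :: "'a::semiring_1^'n^'m"
  assumes "invertible A"
  shows "A ** matrix_inv A = mat 1"
  using someI_ex[OF assms[unfolded invertible_def]] unfolding matrix_inv_def by blast

lemma transpose_matrix_inv_symmetric:
  fixes A :: "'a::comm_semiring_1^'n^'n"
  assumes "invertible A" and "transpose A = A"
  shows "transpose (matrix_inv A) = matrix_inv A"
proof -
  let ?B = "matrix_inv A"
  have left_inverse: "transpose ?B ** A = mat 1"
    by (metis assms matrix_mul_matrix_inv matrix_transpose_mul transpose_mat)
  have "transpose ?B = transpose ?B ** (A ** ?B)"
    using matrix_mul_matrix_inv[OF assms(1)] by simp
  also have "\<dots> = ?B"
    by (simp add: matrix_mul_assoc left_inverse)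
  finally show ?thesis .
qed

lemma transpose_emp_cov: "transpose (emp_cov M \<theta>) = emp_cov M \<theta>"
  unfolding emp_cov_def outer_prod_def
  by (simp add: transpose_def vec_eq_iff mult.commute)

lemma GDERIV_quadratic_form:
  fixes A :: "real^'n^'n"
  assumes "transpose A = A"
  shows "GDERIV (\<lambda>x. (x - y) \<bullet> (A *v (x - y))) x :> 2 *\<^sub>R (A *v (x - y))"
proof -
  have "((\<lambda>x. (x - y) \<bullet> (A *v (x - y))) has_derivative
        (\<lambda>h. (x - y) \<bullet> (A *v h) + h \<bullet> (A *v (x - y)))) (at x)"
    by (auto intro!: derivative_eq_intros
        bounded_linear.has_derivative[OF matrix_vector_mul_bounded_linear])
  moreover have "(x - y) \<bullet> (A *v h) = h \<bullet> (A *v (x - y))" for h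
    by (metis assms dot_lmul_matrix inner_commute vector_transpose_matrix)
  ultimately show ?thesis
    unfolding gderiv_def by simp
qed

lemma GDERIV_sum:
  assumes "\<And>j. j \<in> J \<Longrightarrow> GDERIV (f j) x :> df j"
  shows "GDERIV (\<lambda>x. \<Sum>j\<in>J. f j x) x :> (\<Sum>j\<in>J. df j)"
  using has_derivative_sum[of J "\<lambda>j. f j" "\<lambda>j h. h \<bullet> df j"] assms
  unfolding gderiv_def by (simp add: inner_sum_right)

lemma GDERIV_weighted_average:
  fixes w :: "'j \<Rightarrow> 'a::real_inner \<Rightarrow> real" and J :: "'j set" and x :: 'a
  defines "W \<equiv> \<Sum>j\<in>J. w j x"
  assumes "W \<noteq> 0" and "\<And>j. j \<in> J \<Longrightarrow> GDERIV (w j) x :> dw j"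
  shows "GDERIV (\<lambda>y. (\<Sum>j\<in>J. w j y * r j) / (\<Sum>j\<in>J. w j y)) x
           :> (\<Sum>j\<in>J. ((r j - (\<Sum>k\<in>J. w k x * r k) / W) / W) *\<^sub>R dw j)"
proof -
  let ?N = "\<Sum>k\<in>J. w k x * r k"
  have "GDERIV (\<lambda>y. \<Sum>j\<in>J. w j y * r j) x :> (\<Sum>j\<in>J. r j *\<^sub>R dw j)"
    using GDERIV_mult[OF assms(3) GDERIV_const] by (intro GDERIV_sum) simp
  moreover have "GDERIV (\<lambda>y. inverse (\<Sum>j\<in>J. w j y)) x :> - (inverse W)\<^sup>2 *\<^sub>R (\<Sum>j\<in>J. dw j)"
    using assms(2,3) unfolding W_def by (intro GDERIV_inverse GDERIV_sum)
  ultimately have "GDERIV (\<lambda>y. (\<Sum>j\<in>J. w j y * r j) / (\<Sum>j\<in>J. w j y)) x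
          :> ?N *\<^sub>R (- (inverse W)\<^sup>2 *\<^sub>R (\<Sum>j\<in>J. dw j)) + inverse W *\<^sub>R (\<Sum>j\<in>J. r j *\<^sub>R dw j)"
    unfolding divide_inverse W_def by (rule GDERIV_mult)
  moreover have "?N *\<^sub>R (- (inverse W)\<^sup>2 *\<^sub>R (\<Sum>j\<in>J. dw j)) + inverse W *\<^sub>R (\<Sum>j\<in>J. r j *\<^sub>R dw j)
      = (\<Sum>j\<in>J. ((r j - ?N / W) / W) *\<^sub>R dw j)"
    by (simp add: scaleR_sum_right scaleR_scaleR diff_divide_distrib scaleR_left_diff_distrib
        sum_subtractf sum_negf power2_eq_square field_simps)
  ultimately show ?thesis by simp
qed

lemma GDERIV_g_eps:
  assumes "invertible (emp_cov M \<theta>)"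
  shows "GDERIV (\<lambda>x. g_eps M \<theta> \<epsilon> x y) x :>
           (- g_eps M \<theta> \<epsilon> x y / (2 * \<epsilon>)) *\<^sub>R (matrix_inv (emp_cov M \<theta>) *v (x - y))"
proof -
  let ?A = "matrix_inv (emp_cov M \<theta>)"
  have "transpose ?A = ?A"
    by (rule transpose_matrix_inv_symmetric[OF assms transpose_emp_cov])
  then have "GDERIV (\<lambda>x. - (1 / (4 * \<epsilon>)) * ((x - y) \<bullet> (?A *v (x - y)))) x :>
               (- (1 / (4 * \<epsilon>))) *\<^sub>R (2 *\<^sub>R (?A *v (x - y)))"
    by (intro GDERIV_subst[OF GDERIV_mult[OF GDERIV_const GDERIV_quadratic_form]]) simp_all
  from GDERIV_DERIV_compose[OF this DERIV_exp]
  show ?thesis unfolding g_eps_def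
    by (rule GDERIV_subst) (simp add: field_simps)
qed

lemma g_eps_pos: "0 < g_eps M \<theta> \<epsilon> x y"
  unfolding g_eps_def by simp

text \<open>k_eps without its x-dependent normaliser, which cancels in both V_interp and markov_T.\<close>
definition kernel_weight :: "nat \<Rightarrow> (nat \<Rightarrow> real^'d) \<Rightarrow> real \<Rightarrow> nat \<Rightarrow> real^'d \<Rightarrow> real" where
  "kernel_weight M \<theta> \<epsilon> j x = g_eps M \<theta> \<epsilon> x (\<theta> j) / sqrt (\<Sum>k=1..M. g_eps M \<theta> \<epsilon> (\<theta> j) (\<theta> k))"

lemma k_eps_eq_kernel_weight:
  "k_eps M \<theta> \<epsilon> x (\<theta> j) = kernel_weight M \<theta> \<epsilon> j x / sqrt (\<Sum>k=1..M. g_eps M \<theta> \<epsilon> x (\<theta> k))"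
  unfolding k_eps_def kernel_weight_def by simp

lemma kernel_weight_pos:
  assumes "0 < M"
  shows "0 < kernel_weight M \<theta> \<epsilon> j x"
proof -
  have "0 < (\<Sum>k=1..M. g_eps M \<theta> \<epsilon> (\<theta> j) (\<theta> k))"
    using assms by (intro sum_pos) (auto simp: g_eps_pos)
  then show ?thesis
    unfolding kernel_weight_def by (simp add: g_eps_pos)
qed

lemma GDERIV_kernel_weight:
  assumes "invertible (emp_cov M \<theta>)"
  shows "GDERIV (kernel_weight M \<theta> \<epsilon> j) x :>
           (- kernel_weight M \<theta> \<epsilon> j x / (2 * \<epsilon>)) *\<^sub>R (matrix_inv (emp_cov M \<theta>) *v (x - \<theta> j))"
proof -
  let ?s = "sqrt (\<Sum>k=1..M. g_eps M \<theta> \<epsilon> (\<theta> j) (\<theta> k))"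
  have "kernel_weight M \<theta> \<epsilon> j = (\<lambda>x. inverse ?s * g_eps M \<theta> \<epsilon> x (\<theta> j))"
    unfolding kernel_weight_def by (simp add: divide_inverse mult.commute)
  moreover have "GDERIV (\<lambda>x. inverse ?s * g_eps M \<theta> \<epsilon> x (\<theta> j)) x :>
      inverse ?s *\<^sub>R ((- g_eps M \<theta> \<epsilon> x (\<theta> j) / (2 * \<epsilon>)) *\<^sub>R (matrix_inv (emp_cov M \<theta>) *v (x - \<theta> j)))"
    using GDERIV_mult[OF GDERIV_const GDERIV_g_eps[OF assms]] by simp
  ultimately show ?thesis
    by (simp add: kernel_weight_def)
qed

lemma V_interp_eq_weighted_average:
  assumes "0 < M"
  shows "V_interp M \<theta> \<epsilon> r x =
           (\<Sum>j=1..M. kernel_weight M \<theta> \<epsilon> j x * r j) / (\<Sum>j=1..M. kernel_weight M \<theta> \<epsilon> j x)"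
proof -
  have "0 < (\<Sum>k=1..M. g_eps M \<theta> \<epsilon> x (\<theta> k))"
    using assms by (intro sum_pos) (auto simp: g_eps_pos)
  then show ?thesis
    unfolding V_interp_def n_eps_def k_eps_eq_kernel_weight
    by (simp add: sum_divide_distrib[symmetric] field_simps)
qed

lemma markov_T_eq_kernel_weight:
  assumes "0 < M"
  shows "markov_T M \<theta> \<epsilon> i j =
           kernel_weight M \<theta> \<epsilon> j (\<theta> i) / (\<Sum>k=1..M. kernel_weight M \<theta> \<epsilon> k (\<theta> i))"
proof -
  have "0 < (\<Sum>k=1..M. g_eps M \<theta> \<epsilon> (\<theta> i) (\<theta> k))"
    using assms by (intro sum_pos) (auto simp: g_eps_pos)
  then show ?thesis
    unfolding markov_T_def n_eps_def k_eps_eq_kernel_weight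
    by (simp add: sum_divide_distrib[symmetric] field_simps)
qed

lemma sum_markov_T:
  assumes "0 < M"
  shows "(\<Sum>j=1..M. markov_T M \<theta> \<epsilon> i j) = 1"
proof -
  have "0 < (\<Sum>k=1..M. kernel_weight M \<theta> \<epsilon> k (\<theta> i))"
    using assms by (intro sum_pos) (auto simp: kernel_weight_pos)
  then show ?thesis
    unfolding markov_T_eq_kernel_weight[OF assms] by (simp add: sum_divide_distrib[symmetric])
qed

lemma sum_s_coef_eq_0:
  assumes "(\<Sum>j=1..M. markov_T M \<theta> \<epsilon> i j) = 1"
  shows "(\<Sum>j=1..M. s_coef M \<theta> \<epsilon> r i j) = 0"
proof -
  let ?T = "markov_T M \<theta> \<epsilon> i" and ?c = "1 / (2 * \<epsilon>)"
  let ?avg = "\<Sum>k=1..M. ?T k * r k"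
  have "(\<Sum>j=1..M. s_coef M \<theta> \<epsilon> r i j) = (\<Sum>j=1..M. ?c * (?T j * r j - ?T j * ?avg))"
    unfolding s_coef_def by (simp add: right_diff_distrib mult.assoc)
  also have "\<dots> = ?c * (?avg - (\<Sum>j=1..M. ?T j) * ?avg)"
    by (simp only: sum_distrib_left[symmetric] sum_subtractf sum_distrib_right[symmetric])
  finally show ?thesis
    using assms by simp
qed

lemma sum_scaleR_diff_eq:
  fixes v :: "'j \<Rightarrow> 'a::real_vector"
  assumes "(\<Sum>j\<in>J. a j) = 0"
  shows "(\<Sum>j\<in>J. a j *\<^sub>R (v j - u)) = (\<Sum>j\<in>J. a j *\<^sub>R v j)"
  by (simp add: scaleR_diff_right sum_subtractf scaleR_sum_left[symmetric] assms)

lemma GDERIV_V_interp_ensemble: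
  assumes "invertible (emp_cov M \<theta>)" and "0 < M"
  shows "GDERIV (V_interp M \<theta> \<epsilon> r) (\<theta> i) :>
           (\<Sum>j=1..M. s_coef M \<theta> \<epsilon> r i j *\<^sub>R (matrix_inv (emp_cov M \<theta>) *v (\<theta> j - \<theta> i)))"
proof -
  define w where "w = kernel_weight M \<theta> \<epsilon>"
  define W where "W = (\<Sum>k=1..M. w k (\<theta> i))"
  define avg where "avg = (\<Sum>k=1..M. w k (\<theta> i) * r k) / W"
  let ?A = "matrix_inv (emp_cov M \<theta>)"
  have "0 < W"
    unfolding W_def w_def using assms(2) by (intro sum_pos) (auto simp: kernel_weight_pos)
  have "(\<Sum>k=1..M. markov_T M \<theta> \<epsilon> i k * r k) = avg"
    unfolding markov_T_eq_kernel_weight[OF assms(2)] avg_def W_def w_def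
    by (simp add: sum_divide_distrib)
  then have s_coef: "s_coef M \<theta> \<epsilon> r i j = (r j - avg) / W * w j (\<theta> i) / (2 * \<epsilon>)" for j
    unfolding s_coef_def markov_T_eq_kernel_weight[OF assms(2)] W_def w_def by (simp add: ac_simps)
  have "V_interp M \<theta> \<epsilon> r = (\<lambda>x. (\<Sum>j=1..M. w j x * r j) / (\<Sum>j=1..M. w j x))"
    using V_interp_eq_weighted_average[OF assms(2)] unfolding w_def by blast
  then have "GDERIV (V_interp M \<theta> \<epsilon> r) (\<theta> i) :>
      (\<Sum>j=1..M. ((r j - avg) / W) *\<^sub>R ((- w j (\<theta> i) / (2 * \<epsilon>)) *\<^sub>R (?A *v (\<theta> i - \<theta> j))))"
    using GDERIV_weighted_average[where J="{1..M}" and x="\<theta> i" and w=w and r=r and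
        dw="\<lambda>j. (- w j (\<theta> i) / (2 * \<epsilon>)) *\<^sub>R (?A *v (\<theta> i - \<theta> j))"] \<open>0 < W\<close>
      GDERIV_kernel_weight[OF assms(1)]
    unfolding avg_def W_def w_def by simp
  moreover have "((r j - avg) / W) *\<^sub>R ((- w j (\<theta> i) / (2 * \<epsilon>)) *\<^sub>R (?A *v (\<theta> i - \<theta> j)))
      = s_coef M \<theta> \<epsilon> r i j *\<^sub>R (?A *v (\<theta> j - \<theta> i))" for j
    unfolding s_coef matrix_vector_mult_diff_distrib by (simp add: scaleR_diff_right)
  ultimately show ?thesis
    by simp
qed

theorem mainTheorem2:
  fixes M :: nat and \<theta> :: "nat \<Rightarrow> real^'d" and \<epsilon> :: real
    and \<Psi> :: "real^'d \<Rightarrow> real" and Vt :: "nat \<Rightarrow> real"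
  assumes "invertible (emp_cov M \<theta>)"
    and "\<epsilon> > 0"
    and "\<forall>i\<in>{1..M}. Vt i = (\<Sum>j=1..M. markov_T M \<theta> \<epsilon> i j * Vt j) + \<epsilon> * delta_Psi M \<theta> \<Psi> i"
  shows "\<forall>i\<in>{1..M}. \<exists>G.
           (GDERIV (V_interp M \<theta> \<epsilon> (r_vec M \<theta> \<epsilon> \<Psi> Vt)) (\<theta> i) :> G) \<and>
           emp_cov M \<theta> *v G = (\<Sum>j=1..M. s_coef M \<theta> \<epsilon> (r_vec M \<theta> \<epsilon> \<Psi> Vt) i j *\<^sub>R \<theta> j)"
proof
  fix i assume "i \<in> {1..M}"
  then have "0 < M" by simp
  let ?r = "r_vec M \<theta> \<epsilon> \<Psi> Vt" and ?S = "emp_cov M \<theta>"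
  let ?s = "s_coef M \<theta> \<epsilon> ?r i"
  have "?S *v (\<Sum>j=1..M. ?s j *\<^sub>R (matrix_inv ?S *v (\<theta> j - \<theta> i)))
      = (\<Sum>j=1..M. ?s j *\<^sub>R (\<theta> j - \<theta> i))"
    by (simp add: vec.sum matrix_vector_mult_scaleR matrix_vector_mul_assoc
        matrix_mul_matrix_inv[OF assms(1)])
  also have "\<dots> = (\<Sum>j=1..M. ?s j *\<^sub>R \<theta> j)"
    by (rule sum_scaleR_diff_eq[OF sum_s_coef_eq_0[OF sum_markov_T[OF \<open>0 < M\<close>]]])
  finally show "\<exists>G. (GDERIV (V_interp M \<theta> \<epsilon> ?r) (\<theta> i) :> G) \<and> ?S *v G = (\<Sum>j=1..M. ?s j *\<^sub>R \<theta> j)"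
    using GDERIV_V_interp_ensemble[OF assms(1) \<open>0 < M\<close>] by blast
qed

end
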